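(* Let $3\le p\le q<\omega$, $0\le n<\omega$, and $0\le i,j\le p$ with $i\ne j$. Then $\mathfrak L^{ij}(p,n)$ is isomorphic to a subalgebra of $\mathfrak L(q,n)$.
   Context: For $3\le p<\omega$, $0\le n<\omega$, $\mathfrak L(p,n)$ is the finite symmetric (i.e. $\breve x=x$ for all $x$) integral (i.e. $1'$ is an atom) relation algebra with atoms $1',a_0,\dots,a_p,t_1,\dots,t_n$ whose composition of atoms is given, for $0\le i,j\le p$, $i\ne j$, $1\le k,l\le n$, $k\ne l$, by: $a_i;a_i=1'+a_i$; $a_i;a_j=0'\cdot\overline{a_i+a_j}$ (where $0'=\overline{1'}$); $a_i;t_k=t_1+\cdots+t_n$; $t_k;t_k=1'+a_0+\cdots+a_p$; $t_k;t_l=a_0+\cdots+a_p$ (and composition with $1'$ is the identity). For $0\le i,j\le p$, $i\ne j$, $\mathfrak L^{ij}(p,n)$ is the subalgebra of $\mathfrak L(p,n)$ whose atoms are $1'$, $a_i+a_j$, the $a_k$ for $0\le k\le p$ with $k\ne i,j$, and $t_1,\dots,t_n$. *)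

theory Defs
  imports Main
begin

text \<open>Atoms of the finite relation algebras L(p,n): the identity atom 1',
  the atoms a_0..a_p (A i), and t_1..t_n (T k).
  Elements of the (complete atomic) algebra are represented as sets of atoms.\<close>

datatype atm = Id | A nat | T nat

record 'a ra =
  carrier :: "'a set"
  join :: "'a \<Rightarrow> 'a \<Rightarrow> 'a"
  compl :: "'a \<Rightarrow> 'a"
  rcomp :: "'a \<Rightarrow> 'a \<Rightarrow> 'a"
  conv :: "'a \<Rightarrow> 'a"
  ident :: "'a"

definition Aats :: "nat \<Rightarrow> atm set" where
  "Aats p = A ` {0..p}"

definition Tats :: "nat \<Rightarrow> atm set" where
  "Tats n = T ` {1..n}"

definition atoms :: "nat \<Rightarrow> nat \<Rightarrow> atm set" where
  "atoms p n = {Id} \<union> Aats p \<union> Tats n"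

fun atcomp :: "nat \<Rightarrow> nat \<Rightarrow> atm \<Rightarrow> atm \<Rightarrow> atm set" where
  "atcomp p n Id y = {y}"
| "atcomp p n x Id = {x}"
| "atcomp p n (A i) (A j) =
     (if i = j then {Id, A i} else atoms p n - {Id, A i, A j})"
| "atcomp p n (A i) (T k) = Tats n"
| "atcomp p n (T k) (A i) = Tats n"
| "atcomp p n (T k) (T l) = (if k = l then {Id} \<union> Aats p else Aats p)"

definition L :: "nat \<Rightarrow> nat \<Rightarrow> atm set ra" where
  "L p n = \<lparr> carrier = Pow (atoms p n),
             join = (\<lambda>X Y. X \<union> Y),
             compl = (\<lambda>X. atoms p n - X),
             rcomp = (\<lambda>X Y. \<Union>x\<in>X. \<Union>y\<in>Y. atcomp p n x y),
             conv = (\<lambda>X. X),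
             ident = {Id} \<rparr>"

definition atoms_ij :: "nat \<Rightarrow> nat \<Rightarrow> nat \<Rightarrow> nat \<Rightarrow> atm set set" where
  "atoms_ij p n i j = {{Id}, {A i, A j}} \<union> {{A k} | k. k \<le> p \<and> k \<noteq> i \<and> k \<noteq> j}
      \<union> {{T k} | k. 1 \<le> k \<and> k \<le> n}"

definition restrict_ra :: "'a ra \<Rightarrow> 'a set \<Rightarrow> 'a ra" where
  "restrict_ra R S = R\<lparr>carrier := S\<rparr>"

definition Lij :: "nat \<Rightarrow> nat \<Rightarrow> nat \<Rightarrow> nat \<Rightarrow> atm set ra" where
  "Lij p n i j = restrict_ra (L p n) {\<Union>B | B. B \<subseteq> atoms_ij p n i j}"

definition subalgebra :: "'a set \<Rightarrow> 'a ra \<Rightarrow> bool" where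
  "subalgebra S R \<longleftrightarrow> S \<subseteq> carrier R \<and> ident R \<in> S
     \<and> (\<forall>x\<in>S. \<forall>y\<in>S. join R x y \<in> S \<and> rcomp R x y \<in> S)
     \<and> (\<forall>x\<in>S. compl R x \<in> S \<and> conv R x \<in> S)"

definition ra_iso :: "('a \<Rightarrow> 'b) \<Rightarrow> 'a ra \<Rightarrow> 'b ra \<Rightarrow> bool" where
  "ra_iso f R S \<longleftrightarrow> bij_betw f (carrier R) (carrier S)
     \<and> f (ident R) = ident S
     \<and> (\<forall>x\<in>carrier R. \<forall>y\<in>carrier R.
          f (join R x y) = join S (f x) (f y) \<and> f (rcomp R x y) = rcomp S (f x) (f y))
     \<and> (\<forall>x\<in>carrier R. f (compl R x) = compl S (f x) \<and> f (conv R x) = conv S (f x))"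

end

theory Submission
  imports Defs
begin

text \<open>Let \<open>c\<close> map the atoms of \<open>\<frakL>(q,n)\<close> onto those of \<open>\<frakL>(p,n)\<close> by sending every
  new atom \<open>a\<^sub>k\<close> (\<open>p < k \<le> q\<close>) to \<open>a\<^sub>i\<close> and fixing all other atoms. The elements of
  \<open>\<frakL>\<^sup>i\<^sup>j(p,n)\<close> are the sets of atoms fixed by the transposition \<open>a\<^sub>i \<leftrightarrow> a\<^sub>j\<close>, which is an
  automorphism of the atom structure. Taking preimages under \<open>c\<close> is injective and preserves
  the Boolean operations and the identity. It also preserves composition of such elements:
  every composition triangle of \<open>\<frakL>(q,n)\<close> is mapped by \<open>c\<close> to a triangle of \<open>\<frakL>(p,n)\<close> up to
  swapping \<open>a\<^sub>i\<close> and \<open>a\<^sub>j\<close>, and every triangle of \<open>\<frakL>(p,n)\<close> with an edge \<open>a\<^sub>i\<close> lifts to one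
  whose edge is an arbitrary new atom, using \<open>a\<^sub>i ; a\<^sub>j \<ge> a\<^sub>k\<close>.\<close>

definition ra_hom_on :: "'a set \<Rightarrow> ('a \<Rightarrow> 'b) \<Rightarrow> 'a ra \<Rightarrow> 'b ra \<Rightarrow> bool" where
  "ra_hom_on C f R S \<longleftrightarrow> f (ident R) = ident S
     \<and> (\<forall>x\<in>C. \<forall>y\<in>C. f (join R x y) = join S (f x) (f y) \<and> f (rcomp R x y) = rcomp S (f x) (f y))
     \<and> (\<forall>x\<in>C. f (compl R x) = compl S (f x) \<and> f (conv R x) = conv S (f x))"

lemma restrict_ra_simps [simp]:
  "carrier (restrict_ra R C) = C" "join (restrict_ra R C) = join R"
  "compl (restrict_ra R C) = compl R" "rcomp (restrict_ra R C) = rcomp R"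
  "conv (restrict_ra R C) = conv R" "ident (restrict_ra R C) = ident R"
  by (simp_all add: restrict_ra_def)

lemma subalgebra_image:
  assumes "subalgebra C R" "ra_hom_on C f R S" "f ` C \<subseteq> carrier S"
  shows "subalgebra (f ` C) S"
  unfolding subalgebra_def
proof (intro conjI ballI)
  have C: "ident R \<in> C" "\<And>x y. x \<in> C \<Longrightarrow> y \<in> C \<Longrightarrow> join R x y \<in> C \<and> rcomp R x y \<in> C"
    "\<And>x. x \<in> C \<Longrightarrow> compl R x \<in> C \<and> conv R x \<in> C"
    using assms(1) by (auto simp: subalgebra_def)
  note hom = assms(2)[unfolded ra_hom_on_def]
  show "f ` C \<subseteq> carrier S" by fact
  show "ident S \<in> f ` C" using C(1) hom by (metis image_eqI)
  fix x y assume "x \<in> f ` C" "y \<in> f ` C"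
  then obtain x' y' where "x' \<in> C" "y' \<in> C" "x = f x'" "y = f y'" by blast
  then show "join S x y \<in> f ` C" "rcomp S x y \<in> f ` C" "compl S x \<in> f ` C" "conv S x \<in> f ` C"
    using C(2,3) hom by (metis image_eqI)+
qed

lemma ra_iso_restrict_image:
  assumes "inj_on f C" "ra_hom_on C f R S"
  shows "ra_iso f (restrict_ra R C) (restrict_ra S (f ` C))"
  using assms unfolding ra_iso_def ra_hom_on_def by (simp add: bij_betw_def)

lemma mem_atoms [simp]:
  "Id \<in> atoms p n" "A k \<in> atoms p n \<longleftrightarrow> k \<le> p" "T k \<in> atoms p n \<longleftrightarrow> 1 \<le> k \<and> k \<le> n"
  by (auto simp: atoms_def Aats_def Tats_def)

lemma mem_Aats [simp]: "Id \<notin> Aats p" "A k \<in> Aats p \<longleftrightarrow> k \<le> p" "T k \<notin> Aats p"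
  by (auto simp: Aats_def)

lemma mem_Tats [simp]: "Id \<notin> Tats n" "A k \<notin> Tats n" "T k \<in> Tats n \<longleftrightarrow> 1 \<le> k \<and> k \<le> n"
  by (auto simp: Tats_def)

lemma atoms_mono: "p \<le> q \<Longrightarrow> atoms p n \<subseteq> atoms q n"
  by (auto simp: atoms_def Aats_def)

lemma atcomp_subset_atoms: "x \<in> atoms p n \<Longrightarrow> y \<in> atoms p n \<Longrightarrow> atcomp p n x y \<subseteq> atoms p n"
  by (cases x; cases y) (auto simp: atoms_def)

lemma atcomp_mono:
  assumes "x \<in> atoms p n" "y \<in> atoms p n" "p \<le> q"
  shows "atcomp p n x y \<subseteq> atcomp q n x y"
  using assms by (cases x; cases y) (auto simp: atoms_def Aats_def)

lemma rcomp_L_subset_atoms: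
  assumes "X \<subseteq> atoms p n" "Y \<subseteq> atoms p n"
  shows "rcomp (L p n) X Y \<subseteq> atoms p n"
  using assms atcomp_subset_atoms unfolding L_def by (simp add: UN_least subset_iff) blast

fun swap_atm :: "nat \<Rightarrow> nat \<Rightarrow> atm \<Rightarrow> atm" where
  "swap_atm i j (A k) = A (if k = i then j else if k = j then i else k)"
| "swap_atm i j z = z"

lemma swap_atm_swap_atm [simp]: "swap_atm i j (swap_atm i j x) = x"
  by (cases x) auto

lemma swap_atm_cases:
  "swap_atm i j x = x \<or> x = A i \<and> swap_atm i j x = A j \<or> x = A j \<and> swap_atm i j x = A i"
  by (cases x) auto

lemma bij_swap_atm: "bij (swap_atm i j)"
  by (metis involuntory_imp_bij swap_atm_swap_atm)

lemma swap_atm_image_closed: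
  assumes "\<And>x. x \<in> X \<Longrightarrow> swap_atm i j x \<in> X"
  shows "swap_atm i j ` X = X"
  using assms by (auto, metis image_eqI swap_atm_swap_atm)

lemma swap_atm_in_fixed: "swap_atm i j ` X = X \<Longrightarrow> x \<in> X \<Longrightarrow> swap_atm i j x \<in> X"
  by blast

lemma swap_atm_image_eq_iff: "swap_atm i j ` X = X \<longleftrightarrow> (A i \<in> X \<longleftrightarrow> A j \<in> X)"
proof
  assume fixed: "swap_atm i j ` X = X"
  have "swap_atm i j (A i) = A j" "swap_atm i j (A j) = A i" by simp_all
  then show "A i \<in> X \<longleftrightarrow> A j \<in> X"
    using fixed by (metis imageI)
next
  assume ij: "A i \<in> X \<longleftrightarrow> A j \<in> X"
  show "swap_atm i j ` X = X"
  proof (rule swap_atm_image_closed)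
    show "swap_atm i j x \<in> X" if "x \<in> X" for x
      using swap_atm_cases[of i j x] that ij by metis
  qed
qed

lemma swap_atm_image_atoms:
  assumes "i \<le> p" "j \<le> p"
  shows "swap_atm i j ` atoms p n = atoms p n" "swap_atm i j ` Aats p = Aats p"
    "swap_atm i j ` Tats n = Tats n"
  using assms by (simp_all add: swap_atm_image_eq_iff)

lemma atcomp_swap_atm:
  assumes "i \<le> p" "j \<le> p"
  shows "atcomp p n (swap_atm i j x) (swap_atm i j y) = swap_atm i j ` atcomp p n x y"
  using assms by (cases x; cases y)
    (auto simp: image_set_diff[OF bij_is_inj[OF bij_swap_atm]] swap_atm_image_atoms)

lemma rcomp_L_swap_atm_image:
  assumes "i \<le> p" "j \<le> p"
  shows "swap_atm i j ` rcomp (L p n) X Y = rcomp (L p n) (swap_atm i j ` X) (swap_atm i j ` Y)"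
  using assms by (simp add: L_def image_UN atcomp_swap_atm)

lemma subalgebra_swap_atm_fixed:
  assumes "i \<le> p" "j \<le> p"
  shows "subalgebra {X \<in> Pow (atoms p n). swap_atm i j ` X = X} (L p n)"
  unfolding subalgebra_def
proof (intro conjI ballI)
  let ?C = "{X \<in> Pow (atoms p n). swap_atm i j ` X = X}"
  show "?C \<subseteq> carrier (L p n)" "ident (L p n) \<in> ?C"
    by (auto simp: L_def)
  fix X Y assume X: "X \<in> ?C" and Y: "Y \<in> ?C"
  have "rcomp (L p n) X Y \<subseteq> atoms p n"
    using X Y by (simp add: rcomp_L_subset_atoms)
  then show "rcomp (L p n) X Y \<in> ?C"
    using X Y by (simp add: rcomp_L_swap_atm_image assms)
  show "join (L p n) X Y \<in> ?C" "conv (L p n) X \<in> ?C"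
    using X Y by (auto simp: L_def image_Un)
  show "compl (L p n) X \<in> ?C"
    using X assms
    by (simp add: L_def image_set_diff[OF bij_is_inj[OF bij_swap_atm]] swap_atm_image_atoms)
qed

lemma atoms_ij_cover:
  assumes "x \<in> atoms p n"
  shows "\<exists>b \<in> atoms_ij p n i j. x \<in> b \<and> b \<subseteq> {x, swap_atm i j x}"
proof (cases x)
  case (A k)
  show ?thesis
  proof (cases "k = i \<or> k = j")
    case True
    then show ?thesis
      using A by (intro bexI[of _ "{A i, A j}"]) (auto simp: atoms_ij_def)
  next
    case False
    then show ?thesis
      using A assms by (intro bexI[of _ "{A k}"]) (auto simp: atoms_ij_def)
  qed
qed (use assms in \<open>auto simp: atoms_ij_def\<close>)

lemma carrier_Lij:
  assumes "i \<le> p" "j \<le> p"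
  shows "carrier (Lij p n i j) = {X \<in> Pow (atoms p n). swap_atm i j ` X = X}"
proof -
  have "{\<Union>B | B. B \<subseteq> atoms_ij p n i j} = {X \<in> Pow (atoms p n). A i \<in> X \<longleftrightarrow> A j \<in> X}"
  proof (intro equalityI subsetI)
    fix X assume "X \<in> {\<Union>B | B. B \<subseteq> atoms_ij p n i j}"
    then show "X \<in> {X \<in> Pow (atoms p n). A i \<in> X \<longleftrightarrow> A j \<in> X}"
      using assms by (auto simp: atoms_ij_def)
  next
    fix X assume X: "X \<in> {X \<in> Pow (atoms p n). A i \<in> X \<longleftrightarrow> A j \<in> X}"
    then have "swap_atm i j x \<in> X" if "x \<in> X" for x
      using that swap_atm_image_eq_iff by blast
    then have "X = \<Union>{b \<in> atoms_ij p n i j. b \<subseteq> X}"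
      using X atoms_ij_cover by fastforce
    then show "X \<in> {\<Union>B | B. B \<subseteq> atoms_ij p n i j}"
      by blast
  qed
  then show ?thesis
    by (simp add: Lij_def swap_atm_image_eq_iff)
qed

fun collapse_atm :: "nat \<Rightarrow> nat \<Rightarrow> atm \<Rightarrow> atm" where
  "collapse_atm p i (A k) = A (if p < k then i else k)"
| "collapse_atm p i z = z"

lemma collapse_atm_in_atoms: "z \<in> atoms q n \<Longrightarrow> i \<le> p \<Longrightarrow> collapse_atm p i z \<in> atoms p n"
  by (cases z) auto

lemma collapse_atm_eq_self: "z \<in> atoms p n \<Longrightarrow> collapse_atm p i z = z"
  by (cases z) auto

lemma collapse_atm_eq_Id_iff: "collapse_atm p i z = Id \<longleftrightarrow> z = Id"
  by (cases z) auto

lemma atcomp_collapse_atm_sound: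
  assumes "x \<in> atoms q n" "y \<in> atoms q n" "z \<in> atcomp q n x y" "i \<le> p" "j \<le> p" "i \<noteq> j"
  shows "\<exists>u \<in> {collapse_atm p i x, swap_atm i j (collapse_atm p i x)}.
         \<exists>v \<in> {collapse_atm p i y, swap_atm i j (collapse_atm p i y)}.
           collapse_atm p i z \<in> atcomp p n u v"
  using assms by (cases x; cases y; cases z) (auto split: if_splits)

lemma atcomp_collapse_atm_new:
  assumes "A i \<in> atcomp p n x y" "x \<in> atoms p n" "y \<in> atoms p n" "p < m" "m \<le> q"
    "i \<le> p" "j \<le> p" "i \<noteq> j"
  shows "\<exists>x' \<in> {x, swap_atm i j x, A m}. \<exists>y' \<in> {y, swap_atm i j y, A m}.
    collapse_atm p i x' \<in> {x, swap_atm i j x} \<and> collapse_atm p i y' \<in> {y, swap_atm i j y}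
    \<and> A m \<in> atcomp q n x' y'"
  using assms by (cases x; cases y) (auto split: if_splits)

lemma atcomp_collapse_atm_complete:
  assumes z: "z \<in> atoms q n" "collapse_atm p i z \<in> atcomp p n x y"
    and xy: "x \<in> atoms p n" "y \<in> atoms p n" and "p \<le> q" "i \<le> p" "j \<le> p" "i \<noteq> j"
  obtains x' y' where "x' \<in> atoms q n" "collapse_atm p i x' \<in> {x, swap_atm i j x}"
    "y' \<in> atoms q n" "collapse_atm p i y' \<in> {y, swap_atm i j y}" "z \<in> atcomp q n x' y'"
proof -
  have "{x, swap_atm i j x, z} \<subseteq> atoms q n" "{y, swap_atm i j y, z} \<subseteq> atoms q n"
    using xy z(1) atoms_mono[OF \<open>p \<le> q\<close>] swap_atm_image_atoms(1)[OF assms(6,7)] by blast+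
  moreover obtain x' y' where "x' \<in> {x, swap_atm i j x, z}" "collapse_atm p i x' \<in> {x, swap_atm i j x}"
    "y' \<in> {y, swap_atm i j y, z}" "collapse_atm p i y' \<in> {y, swap_atm i j y}"
    "z \<in> atcomp q n x' y'"
  proof (cases "z \<in> atoms p n")
    case True
    then show thesis
      using that[of x y] z xy atcomp_mono[OF xy \<open>p \<le> q\<close>] by (auto simp: collapse_atm_eq_self)
  next
    case False
    then obtain m where m: "z = A m" "p < m" "m \<le> q"
      using z(1) by (cases z) auto
    then have "A i \<in> atcomp p n x y"
      using z(2) by simp
    from atcomp_collapse_atm_new[OF this xy m(2,3) assms(6-8)]
    show thesis
      using that m(1) by blast
  qed
  ultimately show thesis
    using that by blast
qed

definition collapse_preimage :: "nat \<Rightarrow> nat \<Rightarrow> nat \<Rightarrow> nat \<Rightarrow> atm set \<Rightarrow> atm set" where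
  "collapse_preimage p q n i X = {z \<in> atoms q n. collapse_atm p i z \<in> X}"

lemma collapse_preimage_rcomp:
  assumes X: "X \<subseteq> atoms p n" "swap_atm i j ` X = X" and Y: "Y \<subseteq> atoms p n" "swap_atm i j ` Y = Y"
    and "p \<le> q" "i \<le> p" "j \<le> p" "i \<noteq> j"
  shows "collapse_preimage p q n i (rcomp (L p n) X Y)
    = rcomp (L q n) (collapse_preimage p q n i X) (collapse_preimage p q n i Y)"
    (is "?lhs = ?rhs")
proof
  show "?lhs \<subseteq> ?rhs"
  proof
    fix z assume "z \<in> ?lhs"
    then obtain x y where z: "z \<in> atoms q n" "collapse_atm p i z \<in> atcomp p n x y"
      and xy: "x \<in> X" "y \<in> Y"
      by (auto simp: collapse_preimage_def L_def)
    then have "x \<in> atoms p n" "y \<in> atoms p n"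
      using X Y by auto
    then obtain x' y' where "x' \<in> atoms q n" "collapse_atm p i x' \<in> {x, swap_atm i j x}"
      "y' \<in> atoms q n" "collapse_atm p i y' \<in> {y, swap_atm i j y}" "z \<in> atcomp q n x' y'"
      using atcomp_collapse_atm_complete[OF z] assms(5-8) by metis
    moreover have "swap_atm i j x \<in> X" "swap_atm i j y \<in> Y"
      using xy swap_atm_in_fixed X(2) Y(2) by blast+
    ultimately have "x' \<in> collapse_preimage p q n i X" "y' \<in> collapse_preimage p q n i Y"
      "z \<in> atcomp q n x' y'"
      using xy by (auto simp: collapse_preimage_def)
    then show "z \<in> ?rhs"
      by (auto simp: L_def)
  qed
  show "?rhs \<subseteq> ?lhs"
  proof
    fix z assume "z \<in> ?rhs"
    then obtain x' y' where x': "x' \<in> atoms q n" "collapse_atm p i x' \<in> X"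
      and y': "y' \<in> atoms q n" "collapse_atm p i y' \<in> Y" and z: "z \<in> atcomp q n x' y'"
      by (auto simp: collapse_preimage_def L_def)
    obtain u v where "u \<in> X" "v \<in> Y" "collapse_atm p i z \<in> atcomp p n u v"
      using atcomp_collapse_atm_sound[OF x'(1) y'(1) z assms(6-8)]
        x'(2) y'(2) swap_atm_in_fixed[OF X(2)] swap_atm_in_fixed[OF Y(2)] by blast
    moreover have "z \<in> atoms q n"
      using atcomp_subset_atoms[OF x'(1) y'(1)] z by blast
    ultimately show "z \<in> ?lhs"
      by (auto simp: collapse_preimage_def L_def)
  qed
qed

lemma ra_hom_on_collapse_preimage:
  assumes "p \<le> q" "i \<le> p" "j \<le> p" "i \<noteq> j"
  shows "ra_hom_on {X \<in> Pow (atoms p n). swap_atm i j ` X = X} (collapse_preimage p q n i) (L p n) (L q n)"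
  unfolding ra_hom_on_def
proof (intro conjI ballI)
  show "collapse_preimage p q n i (ident (L p n)) = ident (L q n)"
    by (auto simp: L_def collapse_preimage_def collapse_atm_eq_Id_iff)
  fix X Y assume X: "X \<in> {X \<in> Pow (atoms p n). swap_atm i j ` X = X}"
    and Y: "Y \<in> {X \<in> Pow (atoms p n). swap_atm i j ` X = X}"
  show "collapse_preimage p q n i (rcomp (L p n) X Y)
    = rcomp (L q n) (collapse_preimage p q n i X) (collapse_preimage p q n i Y)"
    using X Y collapse_preimage_rcomp[OF _ _ _ _ assms] by simp
  show "collapse_preimage p q n i (join (L p n) X Y)
    = join (L q n) (collapse_preimage p q n i X) (collapse_preimage p q n i Y)"
    "collapse_preimage p q n i (conv (L p n) X) = conv (L q n) (collapse_preimage p q n i X)"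
    by (auto simp: L_def collapse_preimage_def)
  show "collapse_preimage p q n i (compl (L p n) X) = compl (L q n) (collapse_preimage p q n i X)"
    using collapse_atm_in_atoms[OF _ assms(2)] by (auto simp: L_def collapse_preimage_def)
qed

lemma collapse_preimage_Int_atoms:
  assumes "X \<subseteq> atoms p n" "p \<le> q"
  shows "collapse_preimage p q n i X \<inter> atoms p n = X"
  using assms atoms_mono[OF assms(2)] by (auto simp: collapse_preimage_def collapse_atm_eq_self)

lemma inj_on_collapse_preimage: "p \<le> q \<Longrightarrow> inj_on (collapse_preimage p q n i) (Pow (atoms p n))"
  by (metis PowD collapse_preimage_Int_atoms inj_onI)

theorem lemma5:
  fixes p q n i j :: nat
  assumes "3 \<le> p" and "p \<le> q" and "i \<le> p" and "j \<le> p" and "i \<noteq> j"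
  shows "\<exists>S f. subalgebra S (L q n) \<and> ra_iso f (Lij p n i j) (restrict_ra (L q n) S)"
proof -
  let ?C = "{X \<in> Pow (atoms p n). swap_atm i j ` X = X}"
  let ?f = "collapse_preimage p q n i"
  have Lij: "Lij p n i j = restrict_ra (L p n) ?C"
    using carrier_Lij[OF assms(3,4)] by (simp add: Lij_def restrict_ra_def)
  have hom: "ra_hom_on ?C ?f (L p n) (L q n)"
    using ra_hom_on_collapse_preimage[OF assms(2-5)] .
  have "subalgebra (?f ` ?C) (L q n)"
    using subalgebra_image[OF subalgebra_swap_atm_fixed[OF assms(3,4)] hom]
    by (auto simp: L_def collapse_preimage_def)
  moreover have "inj_on ?f ?C"
    using inj_on_collapse_preimage[OF assms(2)] by (rule inj_on_subset) blast
  then have "ra_iso ?f (Lij p n i j) (restrict_ra (L q n) (?f ` ?C))"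
    unfolding Lij using hom by (rule ra_iso_restrict_image)
  ultimately show ?thesis
    by blast
qed

end
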